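(* For $\pi\in\mathcal{S}_{m,n}$, let $L(\pi)$ be the largest integer $p$ such that there exist indices $i_1<\cdots<i_p$ with $\pi_{i_j}=j$ for all $1\le j\le p$, and let $\mathcal{L}_{m,n}=\mathbb{E}[L(\pi)]$ for $\pi\sim\mathcal{S}_{m,n}$ uniform. If $n$ is sufficiently large in terms of $m$, then \[\mathcal{L}_{m,n}\le m+O(m^{3/4}\log m).\]
   Context: $\mathcal{S}_{m,n}$ is the set of words over the alphabet $[n]=\{1,\dots,n\}$ in which each symbol appears exactly $m$ times; $\pi\sim\mathcal{S}_{m,n}$ denotes a uniformly random element. The implicit constant in $O(\cdot)$ is absolute. *)

theory Defs
  imports Complex_Main "HOL-Library.Sublist"
begin

definition words :: "nat \<Rightarrow> nat \<Rightarrow> nat list set" where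
  "words m n = {w. length w = m * n \<and> set w \<subseteq> {1..n} \<and> (\<forall>i\<in>{1..n}. count_list w i = m)}"

definition Lword :: "nat list \<Rightarrow> nat" where
  "Lword w = Max {p. subseq [1..<p+1] w}"

definition Lexp :: "nat \<Rightarrow> nat \<Rightarrow> real" where
  "Lexp m n = (\<Sum>w\<in>words m n. real (Lword w)) / real (card (words m n))"

end

theory Submission
  imports Defs
begin

text \<open>Scanning a word from left to right and greedily matching 1, 2, ... computes L.
  The key estimate: if the greedy scan for a list ss of distinct symbols starts at position c
  of a uniformly random word in which every symbol of ss occurs m times (length f = m |ss|),
  the expected number of matches is at most (m + 1)(f - c)/f.  For the induction on ss, a word
  splits into the positions of its first symbol s, a uniform m-subset of the f positions, and
  an independent uniform word on the remaining symbols.  The scan meets s unless all copies of s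
  lie before position c, and then continues in the remaining word with as many letters left as
  there are non-s letters after the copy it met; averaging the induction hypothesis over the
  C(f, m) position patterns is an exact binomial computation.  With c = 0 this gives
  E L \<le> m + 1, much stronger than the bound claimed.\<close>

fun greedy_match :: "'a list \<Rightarrow> 'a list \<Rightarrow> nat" where
  "greedy_match [] w = 0"
| "greedy_match (s # ss) [] = 0"
| "greedy_match (s # ss) (x # xs) =
     (if x = s then Suc (greedy_match ss xs) else greedy_match (s # ss) xs)"

lemma greedy_match_le_length: "greedy_match ss w \<le> length ss"
  by (induction ss w rule: greedy_match.induct) auto

lemma subseq_take_iff_le_greedy_match:
  "p \<le> length ss \<Longrightarrow> subseq (take p ss) w \<longleftrightarrow> p \<le> greedy_match ss w"
proof (induction ss w arbitrary: p rule: greedy_match.induct)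
  case (3 s ss x xs)
  show ?case
  proof (cases "x = s")
    case True
    then show ?thesis using "3.IH"(1)[of "p - 1"] "3.prems" by (cases p) auto
  next
    case False
    then show ?thesis using "3.IH"(2)[of p] "3.prems" by (cases p) auto
  qed
qed (auto simp: take_Cons')

lemma Lword_eq_greedy_match:
  assumes "set w \<subseteq> {1..n}"
  shows "Lword w = greedy_match [1..<n+1] w"
proof -
  have "p \<le> n" if "subseq [1..<p+1] w" for p
  proof (rule ccontr)
    assume "\<not> p \<le> n"
    then have "p \<in> set w" using list_emb_set[OF that, of p] by auto
    with assms \<open>\<not> p \<le> n\<close> show False by auto
  qed
  then have "{p. subseq [1..<p+1] w} = {..greedy_match [1..<n+1] w}"
    using subseq_take_iff_le_greedy_match[of _ "[1..<n+1]" w] greedy_match_le_length[of "[1..<n+1]" w]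
    by (fastforce simp: take_upt simp del: upt_Suc)
  then show ?thesis
    unfolding Lword_def by (simp del: upt_Suc) (rule Max_eqI; auto)
qed

definition patterns :: "nat \<Rightarrow> nat \<Rightarrow> bool list set" where
  "patterns m f = {bs. length bs = f \<and> count_list bs True = m}"

lemma count_list_True_add_False: "count_list bs True + count_list bs False = length bs"
  by (induction bs) auto

lemma finite_patterns: "finite (patterns m f)"
  by (rule finite_subset[OF _ finite_lists_length_eq[of UNIV f]]) (auto simp: patterns_def)

lemma patterns_0_left: "patterns 0 f = {replicate f False}"
proof -
  have "bs = replicate (length bs) False" if "True \<notin> set bs" for bs
    using that by (metis (full_types) replicate_length_same)
  then show ?thesis by (auto simp: patterns_def count_list_0_iff)
qed

lemma patterns_Suc_0: "patterns (Suc m) 0 = {}"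
  by (auto simp: patterns_def)

lemma patterns_Suc_Suc:
  "patterns (Suc m) (Suc f) = Cons True ` patterns m f \<union> Cons False ` patterns (Suc m) f"
  by (auto simp: patterns_def length_Suc_conv split: if_splits)

lemma sum_patterns_Suc_Suc:
  "sum g (patterns (Suc m) (Suc f))
     = (\<Sum>bs\<in>patterns m f. g (True # bs)) + (\<Sum>bs\<in>patterns (Suc m) f. g (False # bs))"
  unfolding patterns_Suc_Suc
  by (subst sum.union_disjoint) (auto simp: finite_patterns sum.reindex)

lemma card_patterns: "card (patterns m f) = f choose m"
proof (induction f arbitrary: m)
  case 0
  then show ?case by (cases m) (simp_all add: patterns_0_left patterns_Suc_0)
next
  case (Suc f)
  show ?case
  proof (cases m)
    case (Suc k)
    have "card (patterns m (Suc f)) = (\<Sum>bs\<in>patterns m (Suc f). 1)" by simp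
    also have "\<dots> = card (patterns k f) + card (patterns m f)"
      unfolding Suc sum_patterns_Suc_Suc by simp
    finally show ?thesis using Suc.IH Suc by simp
  qed (simp add: patterns_0_left)
qed

lemma sum_count_False_patterns:
  "(\<Sum>bs\<in>patterns m f. count_list bs False) = (f - m) * (f choose m)"
proof -
  have "count_list bs False = f - m" if "bs \<in> patterns m f" for bs
    using that count_list_True_add_False[of bs] by (auto simp: patterns_def)
  then show ?thesis by (simp add: card_patterns)
qed

text \<open>A pattern bs marks the positions of a symbol s in a word.  A scan for s started at
  position c stops at the first True at index \<ge> c, if there is one (hit_from c bs).
  The other letters it has passed, falses_before_hit c bs, give the position in the word with s
  deleted where the scan for the next symbol resumes; falses_after_hit c bs of them remain ahead.\<close>

fun hit_from :: "nat \<Rightarrow> bool list \<Rightarrow> bool" where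
  "hit_from _ [] = False"
| "hit_from 0 (b # bs) = (b \<or> hit_from 0 bs)"
| "hit_from (Suc c) (b # bs) = hit_from c bs"

fun falses_before_hit :: "nat \<Rightarrow> bool list \<Rightarrow> nat" where
  "falses_before_hit _ [] = 0"
| "falses_before_hit 0 (b # bs) = (if b then 0 else Suc (falses_before_hit 0 bs))"
| "falses_before_hit (Suc c) (b # bs) = of_bool (\<not> b) + falses_before_hit c bs"

fun falses_after_hit :: "nat \<Rightarrow> bool list \<Rightarrow> nat" where
  "falses_after_hit _ [] = 0"
| "falses_after_hit 0 (b # bs) = (if b then count_list bs False else falses_after_hit 0 bs)"
| "falses_after_hit (Suc c) (b # bs) = falses_after_hit c bs"

lemma hit_from_imp_True_in_set: "hit_from c bs \<Longrightarrow> True \<in> set bs"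
  by (induction c bs rule: hit_from.induct) auto

lemma not_hit_from_replicate_False [simp]: "\<not> hit_from c (replicate n False)"
  using hit_from_imp_True_in_set by fastforce

lemma falses_after_hit_eq_0: "\<not> hit_from c bs \<Longrightarrow> falses_after_hit c bs = 0"
  by (induction c bs rule: hit_from.induct) auto

lemma falses_before_add_after_hit:
  "hit_from c bs \<Longrightarrow> falses_before_hit c bs + falses_after_hit c bs = count_list bs False"
  by (induction c bs rule: hit_from.induct) auto

lemma sum_hit_from_patterns:
  "c \<le> f \<Longrightarrow> (\<Sum>bs\<in>patterns m f. of_bool (hit_from c bs)) + (c choose m) = f choose m"
proof (induction f arbitrary: m c)
  case 0
  then show ?case by (cases m) (simp_all add: patterns_0_left patterns_Suc_0)
next
  case (Suc f)
  show ?case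
  proof (cases m)
    case 0
    then show ?thesis by (simp add: patterns_0_left del: replicate_Suc)
  next
    case (Suc k)
    show ?thesis
    proof (cases c)
      case 0
      then show ?thesis
        using Suc.IH[of 0 m] \<open>m = Suc k\<close> by (simp add: sum_patterns_Suc_Suc card_patterns)
    next
      case (Suc c')
      then show ?thesis
        using Suc.IH[of c' k] Suc.IH[of c' m] Suc.prems \<open>m = Suc k\<close>
        by (simp add: sum_patterns_Suc_Suc)
    qed
  qed
qed

lemma diff_mult_binomial_pred_Pascal:
  "(f - c) * ((f - 1) choose k) + (f - c) * ((f - 1) choose Suc k) = (f - c) * (f choose Suc k)"
  by (cases f) (simp_all add: add_mult_distrib2[symmetric])

lemma sum_falses_after_hit_patterns:
  "c \<le> f \<Longrightarrow> (\<Sum>bs\<in>patterns m f. falses_after_hit c bs) + (f choose Suc m)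
     = (f - c) * ((f - 1) choose m) + (c choose Suc m)"
proof (induction f arbitrary: m c)
  case 0
  then show ?case by (cases m) (simp_all add: patterns_0_left patterns_Suc_0)
next
  case (Suc f)
  show ?case
  proof (cases m)
    case 0
    then show ?thesis
      using Suc.prems by (simp add: patterns_0_left falses_after_hit_eq_0 del: replicate_Suc)
  next
    case (Suc k)
    show ?thesis
    proof (cases c)
      case 0
      have "(f - k) * (f choose k) = f * ((f - 1) choose k)"
        by (rule binomial_absorb_comp)
      then show ?thesis
        using Suc.IH[of 0 m] \<open>m = Suc k\<close> 0 diff_mult_binomial_pred_Pascal[of f 0 k]
        by (simp add: sum_patterns_Suc_Suc sum_count_False_patterns)
    next
      case (Suc c')
      then show ?thesis
        using Suc.IH[of c' k] Suc.IH[of c' m] Suc.prems \<open>m = Suc k\<close>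
          diff_mult_binomial_pred_Pascal[of f c' k]
        by (simp add: sum_patterns_Suc_Suc)
    qed
  qed
qed

lemma Suc_mult_binomial_Suc: "Suc k * (f choose Suc k) = (f - k) * (f choose k)"
  by (simp only: binomial_absorption binomial_absorb_comp)

lemma scaled_sum_falses_after_hit_patterns:
  assumes "m < f" "c \<le> f"
  shows "real (m + 1) * (\<Sum>bs\<in>patterns m f. real (falses_after_hit c bs)) / real (f - m)
    = real (m + 1) * real (f - c) / real f * real (f choose m)
      + real (c - m) / real (f - m) * real (c choose m) - real (f choose m)"
proof -
  define C Cc T where "C = real (f choose m)" and "Cc = real (c choose m)"
    and "T = (\<Sum>bs\<in>patterns m f. real (falses_after_hit c bs))"
  from assms have "0 < f - m" "0 < f" by simp_all
  have "T + real (f choose Suc m) = real (f - c) * real ((f - 1) choose m) + real (c choose Suc m)"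
    using arg_cong[OF sum_falses_after_hit_patterns[OF assms(2), of m], of real]
    unfolding T_def by (simp only: of_nat_add of_nat_mult of_nat_sum)
  moreover have absorb: "real ((f - 1) choose m) = real (f - m) * C / real f"
    "real (Suc m) * real (c choose Suc m) = real (c - m) * Cc"
    "real (Suc m) * real (f choose Suc m) = real (f - m) * C"
    using \<open>0 < f\<close> binomial_absorb_comp[of f m]
    unfolding C_def Cc_def of_nat_mult[symmetric] Suc_mult_binomial_Suc
    by (simp_all add: field_simps flip: of_nat_mult)
  ultimately have "real (Suc m) * T = real (Suc m) * (real (f - c) * real ((f - 1) choose m)
      + real (c choose Suc m) - real (f choose Suc m))"
    by simp
  also have "\<dots> = real (Suc m) * real (f - c) * (real (f - m) * C / real f)
      + real (c - m) * Cc - real (f - m) * C"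
    unfolding right_diff_distrib distrib_left absorb by simp
  finally have "real (m + 1) * T / real (f - m) = (real (Suc m) * real (f - c) * (real (f - m) * C / real f)
      + real (c - m) * Cc - real (f - m) * C) / real (f - m)"
    by simp
  also have "\<dots> = real (m + 1) * real (f - c) / real f * C + real (c - m) / real (f - m) * Cc - C"
    using \<open>0 < f - m\<close> by (simp add: field_simps)
  finally show ?thesis unfolding C_def Cc_def T_def .
qed

lemma sum_hit_weight_patterns_le:
  assumes "m \<le> f" "c \<le> f"
  shows "(\<Sum>bs\<in>patterns m f. of_bool (hit_from c bs)
            * (1 + real (m + 1) * real (falses_after_hit c bs) / real (f - m)))
         \<le> real (m + 1) * real (f - c) / real f * real (f choose m)"
proof -
  define C Cc where "C = real (f choose m)" and "Cc = real (c choose m)"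
  have "of_bool (hit_from c bs) * (1 + real (m + 1) * real (falses_after_hit c bs) / real (f - m))
      = of_bool (hit_from c bs) + real (m + 1) * real (falses_after_hit c bs) / real (f - m)" for bs
    by (auto simp: falses_after_hit_eq_0)
  moreover have "(\<Sum>bs\<in>patterns m f. of_bool (hit_from c bs)) = C - Cc"
    using arg_cong[OF sum_hit_from_patterns[OF assms(2), of m], of real]
    by (simp add: C_def Cc_def)
  ultimately have lhs: "(\<Sum>bs\<in>patterns m f. of_bool (hit_from c bs)
      * (1 + real (m + 1) * real (falses_after_hit c bs) / real (f - m)))
      = C - Cc + real (m + 1) * (\<Sum>bs\<in>patterns m f. real (falses_after_hit c bs)) / real (f - m)"
    by (simp add: sum.distrib sum_distrib_left sum_divide_distrib)
  show ?thesis
  proof (cases "f = m")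
    case True
    \<comment> \<open>the weight divides by f - m = 0, which Isabelle evaluates to 0\<close>
    have "1 - Cc \<le> real (m + 1) * real (m - c) / real m"
    proof (cases "c = m")
      case False
      with True assms have "c < m" by simp
      then have "real (m + 1) * 1 \<le> real (m + 1) * real (m - c)" by (intro mult_left_mono) simp_all
      then have "real m \<le> real (m + 1) * real (m - c)" by (rule order_trans[rotated]) simp
      with \<open>c < m\<close> show ?thesis by (simp add: Cc_def binomial_eq_0 field_simps)
    qed (simp add: Cc_def)
    with True show ?thesis unfolding lhs by (simp add: C_def)
  next
    case False
    with assms have "m < f" by simp
    have "real (c - m) / real (f - m) * Cc \<le> Cc"
      using assms \<open>m < f\<close> by (intro mult_left_le_one_le) (auto simp: Cc_def)
    then show ?thesis
      unfolding lhs scaled_sum_falses_after_hit_patterns[OF \<open>m < f\<close> assms(2)]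
      by (simp add: C_def Cc_def)
  qed
qed

fun interleave :: "'a \<Rightarrow> bool list \<Rightarrow> 'a list \<Rightarrow> 'a list" where
  "interleave s [] v = v"
| "interleave s (True # bs) v = s # interleave s bs v"
| "interleave s (False # bs) [] = []"
| "interleave s (False # bs) (x # v) = x # interleave s bs v"

lemma length_interleave:
  "length v = count_list bs False \<Longrightarrow> length (interleave s bs v) = length bs"
  by (induction s bs v rule: interleave.induct) auto

lemma set_interleave:
  "length v = count_list bs False \<Longrightarrow> set (interleave s bs v) \<subseteq> insert s (set v)"
  by (induction s bs v rule: interleave.induct) auto

lemma count_list_interleave:
  "length v = count_list bs False \<Longrightarrow>
   count_list (interleave s bs v) x = (if x = s then count_list bs True else 0) + count_list v x"
  by (induction s bs v rule: interleave.induct) auto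

lemma map_eq_interleave:
  "s \<notin> set v \<Longrightarrow> length v = count_list bs False \<Longrightarrow> map (\<lambda>x. x = s) (interleave s bs v) = bs"
  by (induction s bs v rule: interleave.induct) auto

lemma filter_neq_interleave:
  "s \<notin> set v \<Longrightarrow> length v = count_list bs False \<Longrightarrow> filter (\<lambda>x. x \<noteq> s) (interleave s bs v) = v"
  by (induction s bs v rule: interleave.induct) auto

lemma interleave_map_filter: "interleave s (map (\<lambda>x. x = s) w) (filter (\<lambda>x. x \<noteq> s) w) = w"
  by (induction w) auto

lemma count_list_map_eq: "count_list (map (\<lambda>x. x = s) w) True = count_list w s"
  by (induction w) auto

lemma count_list_filter_neq: "x \<noteq> s \<Longrightarrow> count_list (filter (\<lambda>x. x \<noteq> s) w) x = count_list w x"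
  by (induction w) auto

lemma greedy_match_interleave_notin:
  "s \<notin> set ss \<Longrightarrow> greedy_match ss (interleave s bs v) = greedy_match ss v"
proof (induction s bs v arbitrary: ss rule: interleave.induct)
  case (2 s bs v)
  then show ?case by (cases ss) auto
next
  case (4 s bs x v)
  then show ?case by (cases ss) auto
qed auto

lemma greedy_match_drop_interleave:
  assumes "s \<notin> set v" "s \<notin> set ss" "length v = count_list bs False"
  shows "greedy_match (s # ss) (drop c (interleave s bs v))
           = (if hit_from c bs then Suc (greedy_match ss (drop (falses_before_hit c bs) v)) else 0)"
  using assms
proof (induction bs arbitrary: c v)
  case Nil
  then show ?case by (cases c) auto
next
  case (Cons b bs)
  show ?case
  proof (cases b)
    case True
    then show ?thesis using Cons by (cases c) (auto simp: greedy_match_interleave_notin)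
  next
    case False
    then obtain x v' where "v = x # v'" using Cons.prems by (cases v) auto
    then show ?thesis using Cons.IH[of v' 0] Cons.IH[of v'] Cons.prems False by (cases c) auto
  qed
qed

definition words_over :: "nat \<Rightarrow> 'a list \<Rightarrow> 'a list set" where
  "words_over m ss =
     {w. length w = m * length ss \<and> set w \<subseteq> set ss \<and> (\<forall>s\<in>set ss. count_list w s = m)}"

lemma words_eq_words_over: "words m n = words_over m [1..<n+1]"
proof -
  have "set [1..<n+1] = {1..n}" by auto
  then show ?thesis unfolding words_def words_over_def by (simp del: upt_Suc)
qed

lemma interleave_mem_words_over:
  assumes "s \<notin> set ss" "bs \<in> patterns m (m * Suc (length ss))" "v \<in> words_over m ss"
  shows "interleave s bs v \<in> words_over m (s # ss)"
proof -
  have l: "length v = count_list bs False"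
    using assms count_list_True_add_False[of bs] by (auto simp: patterns_def words_over_def)
  show ?thesis
    unfolding words_over_def
    using length_interleave[OF l, of s] set_interleave[OF l, of s] count_list_interleave[OF l, of s] assms
    by (auto simp: patterns_def words_over_def count_list_0_iff)
qed

lemma map_eq_mem_patterns:
  "w \<in> words_over m (s # ss) \<Longrightarrow> map (\<lambda>x. x = s) w \<in> patterns m (m * Suc (length ss))"
  by (simp add: words_over_def patterns_def count_list_map_eq)

lemma filter_neq_mem_words_over:
  assumes "s \<notin> set ss" "w \<in> words_over m (s # ss)"
  shows "filter (\<lambda>x. x \<noteq> s) w \<in> words_over m ss"
proof -
  have "length (filter (\<lambda>x. x \<noteq> s) w) + count_list w s = length w"
    by (induction w) auto
  moreover have "count_list (filter (\<lambda>x. x \<noteq> s) w) x = m" if "x \<in> set ss" for x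
    using that assms count_list_filter_neq[of x s w] by (auto simp: words_over_def)
  ultimately show ?thesis
    using assms by (auto simp: words_over_def)
qed

lemma bij_betw_interleave:
  assumes "s \<notin> set ss"
  shows "bij_betw (\<lambda>(bs, v). interleave s bs v)
           (patterns m (m * Suc (length ss)) \<times> words_over m ss) (words_over m (s # ss))"
proof (rule bij_betw_byWitness[where f' = "\<lambda>w. (map (\<lambda>x. x = s) w, filter (\<lambda>x. x \<noteq> s) w)"])
  have "s \<notin> set v \<and> length v = count_list bs False"
    if "bs \<in> patterns m (m * Suc (length ss))" "v \<in> words_over m ss" for bs v
    using that assms count_list_True_add_False[of bs] by (auto simp: patterns_def words_over_def)
  then show "\<forall>p\<in>patterns m (m * Suc (length ss)) \<times> words_over m ss.
      (\<lambda>w. (map (\<lambda>x. x = s) w, filter (\<lambda>x. x \<noteq> s) w)) ((\<lambda>(bs, v). interleave s bs v) p) = p"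
    by (auto simp: map_eq_interleave filter_neq_interleave)
qed (use assms in \<open>auto simp: interleave_map_filter interleave_mem_words_over
       map_eq_mem_patterns filter_neq_mem_words_over simp del: mult_Suc_right\<close>)

lemma sum_words_over_Cons:
  assumes "s \<notin> set ss"
  shows "sum g (words_over m (s # ss))
    = (\<Sum>bs\<in>patterns m (m * Suc (length ss)). \<Sum>v\<in>words_over m ss. g (interleave s bs v))"
  using sum.reindex_bij_betw[OF bij_betw_interleave[OF assms], of g]
  by (simp add: sum.cartesian_product split_def)

lemma card_words_over_Cons:
  assumes "s \<notin> set ss"
  shows "card (words_over m (s # ss)) = (m * Suc (length ss) choose m) * card (words_over m ss)"
  using bij_betw_same_card[OF bij_betw_interleave[OF assms]]
  by (simp add: card_cartesian_product card_patterns)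

lemma sum_greedy_match_drop_interleave_le:
  fixes m :: nat and ss :: "'a list"
  defines "W \<equiv> real (card (words_over m ss))"
  assumes "s \<notin> set ss" "bs \<in> patterns m (m * Suc (length ss))"
    and IH: "\<And>c'. c' \<le> m * length ss \<Longrightarrow> (\<Sum>v\<in>words_over m ss. real (greedy_match ss (drop c' v)))
               \<le> real (m + 1) * real (m * length ss - c') / real (m * length ss) * W"
  shows "(\<Sum>v\<in>words_over m ss. real (greedy_match (s # ss) (drop c (interleave s bs v))))
    \<le> of_bool (hit_from c bs) * (1 + real (m + 1) * real (falses_after_hit c bs) / real (m * length ss)) * W"
proof -
  have v: "s \<notin> set v" "length v = count_list bs False" if "v \<in> words_over m ss" for v
    using that assms count_list_True_add_False[of bs] by (auto simp: patterns_def words_over_def)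
  show ?thesis
  proof (cases "hit_from c bs")
    case True
    define c' where "c' = falses_before_hit c bs"
    have "c' + falses_after_hit c bs = m * length ss"
      using falses_before_add_after_hit[OF True] assms(3) count_list_True_add_False[of bs]
      by (auto simp: c'_def patterns_def)
    then have "c' \<le> m * length ss" "m * length ss - c' = falses_after_hit c bs"
      by simp_all
    then have "(\<Sum>v\<in>words_over m ss. real (greedy_match ss (drop c' v)))
        \<le> real (m + 1) * real (falses_after_hit c bs) / real (m * length ss) * W"
      using IH[of c'] by (simp only:)
    moreover have "(\<Sum>v\<in>words_over m ss. real (greedy_match (s # ss) (drop c (interleave s bs v))))
        = W + (\<Sum>v\<in>words_over m ss. real (greedy_match ss (drop c' v)))"
      using True by (simp add: greedy_match_drop_interleave v assms(2) sum.distrib W_def c'_def)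
    ultimately show ?thesis using True by (simp add: algebra_simps)
  qed (simp add: greedy_match_drop_interleave v assms(2))
qed

lemma sum_greedy_match_drop_words_over_le:
  assumes "distinct ss" "c \<le> m * length ss"
  shows "(\<Sum>w\<in>words_over m ss. real (greedy_match ss (drop c w)))
    \<le> real (m + 1) * real (m * length ss - c) / real (m * length ss) * real (card (words_over m ss))"
  using assms
proof (induction ss arbitrary: c)
  case Nil
  then show ?case by simp
next
  case (Cons s ss)
  define f W where "f = m * Suc (length ss)" and "W = real (card (words_over m ss))"
  have "s \<notin> set ss" "distinct ss" "f - m = m * length ss" "m \<le> f" "c \<le> f"
    using Cons.prems by (auto simp: f_def)
  have "(\<Sum>w\<in>words_over m (s # ss). real (greedy_match (s # ss) (drop c w)))
      = (\<Sum>bs\<in>patterns m f. \<Sum>v\<in>words_over m ss.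
           real (greedy_match (s # ss) (drop c (interleave s bs v))))"
    unfolding f_def by (rule sum_words_over_Cons[OF \<open>s \<notin> set ss\<close>])
  also have "\<dots> \<le> (\<Sum>bs\<in>patterns m f. of_bool (hit_from c bs)
      * (1 + real (m + 1) * real (falses_after_hit c bs) / real (f - m))) * W"
    unfolding sum_distrib_right \<open>f - m = m * length ss\<close> W_def
    by (intro sum_mono sum_greedy_match_drop_interleave_le \<open>s \<notin> set ss\<close> Cons.IH \<open>distinct ss\<close>)
      (simp_all add: f_def)
  also have "\<dots> \<le> real (m + 1) * real (f - c) / real f * real (f choose m) * W"
    by (intro mult_right_mono sum_hit_weight_patterns_le \<open>m \<le> f\<close> \<open>c \<le> f\<close>) (simp add: W_def)
  also have "\<dots> = real (m + 1) * real (f - c) / real f * real (card (words_over m (s # ss)))"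
    by (simp add: card_words_over_Cons[OF \<open>s \<notin> set ss\<close>] f_def W_def)
  finally show ?case by (simp add: f_def)
qed

lemma Lexp_le_plus_one: "Lexp m n \<le> real m + 1"
proof -
  let ?ss = "[1..<n+1]"
  have "(\<Sum>w\<in>words m n. real (Lword w)) = (\<Sum>w\<in>words_over m ?ss. real (greedy_match ?ss (drop 0 w)))"
    unfolding words_eq_words_over[symmetric]
    by (intro sum.cong refl) (use Lword_eq_greedy_match in \<open>simp add: words_def\<close>)
  also have "\<dots> \<le> real (m + 1) * real (m * length ?ss - 0) / real (m * length ?ss)
      * real (card (words_over m ?ss))"
    by (rule sum_greedy_match_drop_words_over_le) simp_all
  also have "\<dots> \<le> real (m + 1) * real (card (words m n))"
    unfolding words_eq_words_over
    by (intro mult_right_mono) (cases "m * length ?ss = 0", simp_all del: upt_Suc)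
  finally show ?thesis
    unfolding Lexp_def by (cases "card (words m n) = 0") (simp_all add: divide_le_eq algebra_simps)
qed

theorem corollary4p2:
  shows "\<exists>C::real. \<forall>m::nat. m \<ge> 2 \<longrightarrow> (\<exists>N::nat. \<forall>n\<ge>N.
           Lexp m n \<le> real m + C * real m powr (3/4) * ln (real m))"
proof (rule exI[of _ 2], intro allI impI)
  fix m :: nat
  assume "m \<ge> 2"
  have "ln (1 / real m) \<le> 1 / real m - 1"
    using \<open>m \<ge> 2\<close> by (intro ln_le_minus_one) simp
  moreover have "1 / real m \<le> 1 / 2" "ln (1 / real m) = - ln (real m)"
    using \<open>m \<ge> 2\<close> by (simp_all add: ln_div)
  ultimately have "1 / 2 \<le> ln (real m)"
    by linarith
  moreover have "1 \<le> real m powr (3/4)"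
    using \<open>m \<ge> 2\<close> by (intro ge_one_powr_ge_zero) simp_all
  ultimately have "1 \<le> 2 * real m powr (3/4) * ln (real m)"
    using mult_mono[of 1 "real m powr (3/4)" "1/2" "ln (real m)"] by simp
  then have "Lexp m n \<le> real m + 2 * real m powr (3/4) * ln (real m)" for n
    using Lexp_le_plus_one[of m n] by linarith
  then show "\<exists>N. \<forall>n\<ge>N. Lexp m n \<le> real m + 2 * real m powr (3/4) * ln (real m)"
    by blast
qed

end
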